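(* Let $n\in\mathbb{N}$ and for $c\in\mathbb{R}$ let \[ D_{2n}(z;c) = \prod_{j=1}^{2n}[z-(j-1)] + (-1)^n c, \quad z\in\mathbb{C}. \] Let $\alpha_1(c),\dots,\alpha_{2n}(c)$ be the roots of $D_{2n}(\cdot;c)$ (with multiplicity), labelled so that each $\alpha_j(c)$ is a continuous function of $c\in\mathbb{R}$ and $\Re(\alpha_1(c))\leq \cdots\leq\Re(\alpha_{2n}(c))$ for all $c\in\mathbb{R}$. Then for $j\in\{1,\dots,2n\}$, \[ \lim_{c\to+\infty}\Re(\alpha_j(c)) = \begin{cases} -\infty, & 1\leq j\leq n,\\ +\infty, & n+1\leq j\leq 2n,\end{cases} \] and \[ \lim_{c\to-\infty}\Re(\alpha_j(c)) = \begin{cases} -\infty, & 1\leq j\leq n-1,\\ n-(1/2), & n\leq j\leq n+1,\\ +\infty, & n+2\leq j\leq 2n.\end{cases} \] *)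

theory Defs
  imports "HOL-Analysis.Analysis" "HOL-Computational_Algebra.Computational_Algebra"
begin

definition Dpoly :: "nat \<Rightarrow> real \<Rightarrow> complex poly" where
  "Dpoly n c = (\<Prod>j\<in>{1..2*n}. [:- of_nat (j - 1), 1:]) + [:(-1) ^ n * complex_of_real c:]"

end

theory Submission
  imports Defs
begin

text \<open>
  With \<open>w = z - (n - 1/2)\<close>, pairing the factors \<open>z - k\<close> and \<open>z - (2n - 1 - k)\<close> gives
  \<open>D\<^sub>2\<^sub>n(z; c) = \<Prod>\<^sub>k\<^sub><\<^sub>n (w\<^sup>2 - b\<^sub>k\<^sup>2) + (-1)\<^sup>n c\<close> with \<open>b\<^sub>k = n - 1/2 - k\<close>. So the roots are symmetric
  under \<open>w \<mapsto> -w\<close>, and labelled by real part they satisfy \<open>Re \<alpha>\<^sub>j + Re \<alpha>\<^sub>2\<^sub>n\<^sub>+\<^sub>1\<^sub>-\<^sub>j = 2n - 1\<close>.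
  A root with \<open>|c|\<close> large and \<open>|Re w|\<close> bounded has \<open>|Im w|\<close> large; then every factor
  \<open>w\<^sup>2 - b\<^sub>k\<^sup>2\<close> points almost in the direction of \<open>-1\<close>, all of them tilted to the same side
  unless \<open>Re w = 0\<close>. Hence the product equals the real number \<open>-(-1)\<^sup>n c\<close> only if \<open>Re w = 0\<close>
  and \<open>c < 0\<close>: for \<open>c \<rightarrow> +\<infinity>\<close> every root leaves each vertical strip around \<open>n - 1/2\<close>, while
  for \<open>c \<rightarrow> -\<infinity>\<close> the roots inside such a strip lie on the critical line \<open>Re z = n - 1/2\<close>.
  On that line \<open>D\<^sub>2\<^sub>n\<close> is \<open>(-1)\<^sup>n (\<Prod>\<^sub>k (t\<^sup>2 + b\<^sub>k\<^sup>2) + c)\<close> at \<open>z = n - 1/2 + it\<close>, which for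
  \<open>c < -\<Prod>\<^sub>k b\<^sub>k\<^sup>2\<close> has exactly the two roots \<open>\<plusminus>t\<^sub>0\<close>, both simple. So the middle labels
  \<open>n, n + 1\<close> sit on the critical line and no third label can, which pushes \<open>\<alpha>\<^sub>n\<^sub>-\<^sub>1\<close> to
  \<open>-\<infinity>\<close> and, by symmetry, \<open>\<alpha>\<^sub>n\<^sub>+\<^sub>2\<close> to \<open>+\<infinity>\<close>.
\<close>

section \<open>Multisets of roots invariant under a reflection\<close>

lemma sorted_reflection_invariant_nth:
  fixes xs :: "'a::linordered_ab_group_add list"
  assumes sorted: "sorted xs" and invariant: "mset (map (\<lambda>x. a - x) xs) = mset xs"
    and i: "i < length xs"
  shows "xs ! i + xs ! (length xs - 1 - i) = a"
proof -
  define ys where "ys = rev (map (\<lambda>x. a - x) xs)"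
  have ys_nth: "ys ! k = a - xs ! (length xs - 1 - k)" if "k < length xs" for k
    using that by (simp add: ys_def rev_nth)
  have "sorted ys"
  proof (rule sorted_iff_nth_mono[THEN iffD2], intro allI impI)
    fix k l assume "k \<le> l" "l < length ys"
    then show "ys ! k \<le> ys ! l"
      by (simp add: ys_def rev_nth sorted_nth_mono[OF sorted])
  qed
  moreover have "mset ys = mset xs"
    using invariant by (simp add: ys_def)
  ultimately have "ys = xs"
    using sorted by (metis properties_for_sort sorted_sort_id)
  then show ?thesis
    using ys_nth[OF i] by (simp add: algebra_simps)
qed

lemma order_le_order_reflect:
  fixes p :: "'a::idom poly"
  assumes reflect: "p \<circ>\<^sub>p [:a, -1:] = p" and "p \<noteq> 0"
  shows "order z p \<le> order (a - z) p"
proof -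
  define k where "k = order z p"
  obtain q where "p = [:-z, 1:] ^ k * q"
    unfolding k_def using order_1 by (blast elim: dvdE)
  then have "p = ([:-z, 1:] ^ k) \<circ>\<^sub>p [:a, -1:] * q \<circ>\<^sub>p [:a, -1:]"
    by (metis reflect pcompose_mult)
  also have "([:-z, 1:] ^ k) \<circ>\<^sub>p [:a, -1:] = (- [:-(a - z), 1:]) ^ k"
  proof -
    have "[:-z, 1:] ^ k = (\<Prod>_<k. [:-z, 1:])"
      by simp
    then show ?thesis
      by (simp only: pcompose_prod) (simp add: pcompose_pCons)
  qed
  finally have "[:-(a - z), 1:] ^ k dvd p"
    by (metis dvd_triv_left power_minus mult.assoc mult.commute dvd_mult)
  then show ?thesis
    using \<open>p \<noteq> 0\<close> order_divides[of "a - z" k p] unfolding k_def by simp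
qed

lemma proots_reflect:
  fixes p :: "'a::idom poly"
  assumes "p \<circ>\<^sub>p [:a, -1:] = p"
  shows "image_mset (\<lambda>z. a - z) (proots p) = proots p"
proof (cases "p = 0")
  case False
  have "order (a - z) p = order z p" for z
    using order_le_order_reflect[OF assms False, of z] order_le_order_reflect[OF assms False, of "a - z"]
    by simp
  moreover have "count (image_mset (\<lambda>z. a - z) M) x = count M (a - x)" for M :: "'a multiset" and x
  proof -
    have "(\<lambda>z. a - z) -` {x} = {a - x}"
      by auto
    then show ?thesis
      by (cases "a - x \<in># M") (auto simp: count_image_mset not_in_iff)
  qed
  ultimately show ?thesis
    using False by (intro multiset_eqI) simp
qed simp

section \<open>Products of complex numbers in the right half-plane\<close>

lemma prod_rcis:
  "finite A \<Longrightarrow> (\<Prod>k\<in>A. rcis (r k) (a k)) = rcis (\<Prod>k\<in>A. r k) (\<Sum>k\<in>A. a k)"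
  by (induction A rule: finite_induct) (simp_all add: rcis_mult)

lemma prod_right_half_plane:
  fixes z :: "'i \<Rightarrow> complex"
  assumes "finite A" and Re_pos: "\<And>k. k \<in> A \<Longrightarrow> 0 < Re (z k)"
    and small: "(\<Sum>k\<in>A. \<bar>Im (z k) / Re (z k)\<bar>) < pi/2"
  shows "0 < Re (\<Prod>k\<in>A. z k)"
    and "Im (\<Prod>k\<in>A. z k) = 0 \<Longrightarrow> (\<Sum>k\<in>A. arctan (Im (z k) / Re (z k))) = 0"
proof -
  define \<theta> where "\<theta> = (\<Sum>k\<in>A. arctan (Im (z k) / Re (z k)))"
  define R where "R = (\<Prod>k\<in>A. cmod (z k))"
  have "(\<Prod>k\<in>A. z k) = (\<Prod>k\<in>A. rcis (cmod (z k)) (arctan (Im (z k) / Re (z k))))"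
    using Re_pos by (intro prod.cong refl) (simp add: arg_conv_arctan[symmetric] rcis_cmod_Arg)
  then have prod_eq: "(\<Prod>k\<in>A. z k) = rcis R \<theta>"
    by (simp add: prod_rcis \<open>finite A\<close> R_def \<theta>_def)
  have "0 < R"
    unfolding R_def using Re_pos by (intro prod_pos) (metis zero_less_norm_iff zero_complex.sel(1) less_irrefl)
  have "\<bar>\<theta>\<bar> \<le> (\<Sum>k\<in>A. \<bar>arctan (Im (z k) / Re (z k))\<bar>)"
    unfolding \<theta>_def by (rule sum_abs)
  also have "\<dots> \<le> (\<Sum>k\<in>A. \<bar>Im (z k) / Re (z k)\<bar>)"
    by (intro sum_mono abs_arctan_le)
  finally have \<theta>: "\<bar>\<theta>\<bar> < pi/2"
    using small by linarith
  show "0 < Re (\<Prod>k\<in>A. z k)"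
    unfolding prod_eq Re_rcis using \<open>0 < R\<close> \<theta> by (intro mult_pos_pos cos_gt_zero_pi) auto
  assume "Im (\<Prod>k\<in>A. z k) = 0"
  then have "sin \<theta> = 0"
    unfolding prod_eq Im_rcis using \<open>0 < R\<close> by simp
  then show "\<theta> = 0"
    by (rule sin_eq_0_pi[rotated 2]) (use \<theta> pi_gt_zero in linarith)+
qed

lemma sum_arctan_divide_eq_0:
  assumes "finite A" "A \<noteq> {}" and "\<And>k. k \<in> A \<Longrightarrow> 0 < r k"
    and "(\<Sum>k\<in>A. arctan (s / r k)) = 0"
  shows "s = 0"
proof (rule ccontr)
  assume "s \<noteq> 0"
  have "0 < sgn s * arctan (s / r k)" if "k \<in> A" for k
    using assms(3)[OF that] \<open>s \<noteq> 0\<close> by (cases "0 < s") (simp_all add: divide_neg_pos)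
  then have "0 < (\<Sum>k\<in>A. sgn s * arctan (s / r k))"
    using assms(1,2) by (intro sum_pos)
  then show False
    using assms(4) by (simp flip: sum_distrib_left)
qed

text \<open>Steepness puts every factor \<open>b\<^sub>k\<^sup>2 - w\<^sup>2\<close> into the right half-plane, with arguments of one
  common sign and of total size below \<open>\<pi>/2\<close>.\<close>

lemma prod_square_minus_Reals_steep:
  fixes w :: complex and b :: "nat \<Rightarrow> real"
  assumes "0 < n" and steep: "2 * real n * \<bar>Re w * Im w\<bar> < (Im w)^2 - (Re w)^2"
    and real: "(\<Prod>k<n. w^2 - of_real (b k)^2) \<in> \<real>"
  shows "Re w = 0 \<and> 0 < (-1)^n * Re (\<Prod>k<n. w^2 - of_real (b k)^2)"
proof -
  define x y where "x = Re w" and "y = Im w"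
  define u where "u k = of_real (b k)^2 - w^2" for k
  have Re_u: "Re (u k) = y^2 + (b k)^2 - x^2" and Im_u: "Im (u k) = - (2 * x * y)" for k
    by (simp_all add: u_def x_def y_def power2_eq_square)
  have prod_eq: "(\<Prod>k<n. w^2 - of_real (b k)^2) = (-1)^n * (\<Prod>k<n. u k)"
    using prod_uminus[of u "{..<n}"] by (simp add: u_def)
  have Re_u_large: "2 * real n * \<bar>x * y\<bar> < Re (u k)" for k
    using steep zero_le_power2[of "b k"] unfolding Re_u x_def y_def by linarith
  then have Re_u_pos: "0 < Re (u k)" for k
    by (rule le_less_trans[rotated]) simp
  have ratio: "\<bar>Im (u k) / Re (u k)\<bar> \<le> 1 / real n" for k
  proof -
    have "\<bar>Im (u k) / Re (u k)\<bar> = 2 * \<bar>x * y\<bar> / Re (u k)"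
      using Re_u_pos[of k] by (simp add: Im_u abs_divide abs_mult)
    also have "\<dots> \<le> 1 / real n"
      using Re_u_large[of k] Re_u_pos[of k] \<open>0 < n\<close>
      by (simp add: frac_le_eq le_divide_eq mult.commute mult.left_commute)
    finally show ?thesis .
  qed
  have "(\<Sum>k<n. \<bar>Im (u k) / Re (u k)\<bar>) \<le> real (card {..<n::nat}) * (1 / real n)"
    by (rule sum_bounded_above) (rule ratio)
  also have "\<dots> < pi/2"
    using \<open>0 < n\<close> pi_gt3 by simp
  finally have small: "(\<Sum>k<n. \<bar>Im (u k) / Re (u k)\<bar>) < pi/2" .
  note half_plane = prod_right_half_plane[OF finite_lessThan Re_u_pos small]
  have "Im (\<Prod>k<n. u k) = 0"
    using real unfolding prod_eq by (auto simp: complex_is_Real_iff)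
  then have arctan_sum: "(\<Sum>k<n. arctan (- (2 * x * y) / Re (u k))) = 0"
    using half_plane(2) by (simp add: Im_u)
  have "x * y = 0"
    using sum_arctan_divide_eq_0[OF finite_lessThan _ Re_u_pos arctan_sum] \<open>0 < n\<close> by auto
  moreover have "y \<noteq> 0"
    using steep unfolding x_def y_def by (auto simp: not_less)
  moreover have "(-1)^n * Re (\<Prod>k<n. w^2 - of_real (b k)^2) = Re (\<Prod>k<n. u k)"
    unfolding prod_eq by (cases "even n") simp_all
  ultimately show ?thesis
    using half_plane(1) by (simp add: x_def)
qed

lemma norm_prod_square_minus_le:
  fixes w :: complex
  assumes "\<And>k. k < n \<Longrightarrow> \<bar>b k\<bar> \<le> B"
  shows "norm (\<Prod>k<n. w^2 - of_real (b k)^2) \<le> (norm w ^ 2 + B^2)^n"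
proof -
  have "norm (\<Prod>k<n. w^2 - of_real (b k)^2) \<le> (\<Prod>k<n. norm (w^2 - of_real (b k)^2))"
    by (rule norm_prod_le)
  also have "\<dots> \<le> (\<Prod>k<n. norm w ^ 2 + B^2)"
  proof (intro prod_mono conjI norm_ge_zero)
    fix k assume "k \<in> {..<n}"
    then have "\<bar>b k\<bar>^2 \<le> B^2"
      using assms by (intro power_mono) auto
    then show "norm (w^2 - of_real (b k)^2) \<le> norm w ^ 2 + B^2"
      using norm_triangle_ineq4[of "w^2" "of_real (b k)^2"] by (simp add: norm_power)
  qed
  finally show ?thesis
    by simp
qed

section \<open>Roots of \<open>D\<^sub>2\<^sub>n\<close>\<close>

lemma prod_lessThan_double_mirror:
  fixes g :: "nat \<Rightarrow> 'a::comm_monoid_mult"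
  shows "(\<Prod>j<2*n. g j) = (\<Prod>k<n. g k * g (2*n - 1 - k))"
proof -
  have "(\<Prod>j<2*n. g j) = (\<Prod>j<n. g j) * (\<Prod>j\<in>{n..<2*n}. g j)"
    by (metis prod.atLeastLessThan_concat lessThan_atLeast0 mult_2 le_add1 zero_le)
  also have "(\<Prod>j\<in>{n..<2*n}. g j) = (\<Prod>k<n. g (2*n - 1 - k))"
    by (rule prod.reindex_bij_witness[of _ "\<lambda>k. 2*n - 1 - k" "\<lambda>j. 2*n - 1 - j"]) auto
  finally show ?thesis
    by (simp add: prod.distrib)
qed

lemma poly_Dpoly:
  "poly (Dpoly n c) z =
     (\<Prod>k<n. (z - of_real (real n - 1/2))^2 - of_real (real n - 1/2 - real k)^2) + (-1)^n * of_real c"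
proof -
  have "poly (Dpoly n c) z = (\<Prod>j\<in>{1..2*n}. z - of_nat (j - 1)) + (-1)^n * of_real c"
    by (simp add: Dpoly_def poly_prod algebra_simps)
  also have "(\<Prod>j\<in>{1..2*n}. z - of_nat (j - 1)) = (\<Prod>j<2*n. z - of_nat j)"
    by (rule prod.reindex_bij_witness[of _ Suc "\<lambda>j. j - 1"]) auto
  also have "\<dots> = (\<Prod>k<n. (z - of_nat k) * (z - of_nat (2*n - 1 - k)))"
    by (rule prod_lessThan_double_mirror)
  also have "\<dots> = (\<Prod>k<n. (z - of_real (real n - 1/2))^2 - of_real (real n - 1/2 - real k)^2)"
    by (intro prod.cong refl) (simp add: of_nat_diff power2_eq_square algebra_simps)
  finally show ?thesis .
qed

definition crit_line_prod :: "nat \<Rightarrow> real \<Rightarrow> real" where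
  "crit_line_prod n t = (\<Prod>k<n. t^2 + (real n - 1/2 - real k)^2)"

lemma poly_Dpoly_critical_line:
  "poly (Dpoly n c) (Complex (real n - 1/2) t) = (-1)^n * of_real (crit_line_prod n t + c)"
proof -
  have factor: "(Complex (real n - 1/2) t - of_real (real n - 1/2))^2 - of_real (real n - 1/2 - real k)^2
      = - of_real (t^2 + (real n - 1/2 - real k)^2)" for k
    by (simp add: complex_eq_iff power2_eq_square)
  show ?thesis
    unfolding poly_Dpoly factor prod_uminus crit_line_prod_def of_real_prod[symmetric]
    by (simp add: algebra_simps)
qed

lemma crit_line_prod_strict_mono:
  assumes "0 < n" "s^2 < t^2"
  shows "crit_line_prod n s < crit_line_prod n t"
  unfolding crit_line_prod_def
proof (rule prod_mono_strict[of 0])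
  have "0 < (real n - 1/2 - real k)^2" if "k < n" for k
    using that by (simp add: of_nat_less_iff[symmetric] del: of_nat_less_iff)
  then show "\<And>k. k \<in> {..<n} \<Longrightarrow> 0 \<le> s^2 + (real n - 1/2 - real k)^2 \<and>
      s^2 + (real n - 1/2 - real k)^2 \<le> t^2 + (real n - 1/2 - real k)^2"
    using assms by (auto intro: add_nonneg_nonneg)
qed (use assms in \<open>auto intro: add_nonneg_pos\<close>)

lemma crit_line_prod_eq_iff:
  assumes "0 < n"
  shows "crit_line_prod n s = crit_line_prod n t \<longleftrightarrow> s^2 = t^2"
proof
  show "crit_line_prod n s = crit_line_prod n t \<Longrightarrow> s^2 = t^2"
    using crit_line_prod_strict_mono[OF assms, of s t] crit_line_prod_strict_mono[OF assms, of t s]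
    by (cases "s^2 < t^2"; cases "t^2 < s^2") auto
qed (simp add: crit_line_prod_def)

lemma crit_line_prod_surj:
  assumes "0 < n" "crit_line_prod n 0 \<le> y"
  shows "\<exists>t. crit_line_prod n t = y"
proof -
  define T where "T = 1 + y"
  have "0 \<le> crit_line_prod n 0"
    unfolding crit_line_prod_def by (intro prod_nonneg) auto
  then have T: "1 \<le> T"
    using assms(2) by (simp add: T_def)
  have "T ^ 1 \<le> T ^ (2*n)"
    using T assms(1) by (intro power_increasing) auto
  also have "\<dots> = (\<Prod>k<n. T^2)"
    by (simp add: power_mult)
  also have "\<dots> \<le> crit_line_prod n T"
    unfolding crit_line_prod_def by (intro prod_mono) auto
  finally have "y \<le> crit_line_prod n T"
    by (simp add: T_def)
  moreover have "continuous_on {0..T} (crit_line_prod n)"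
    unfolding crit_line_prod_def by (intro continuous_intros)
  ultimately show ?thesis
    using IVT'[of "crit_line_prod n" 0 y T] assms(2) T by auto
qed

lemma Dpoly_critical_line_root_iff:
  "poly (Dpoly n c) (Complex (real n - 1/2) t) = 0 \<longleftrightarrow> crit_line_prod n t = - c"
  by (simp add: poly_Dpoly_critical_line add_eq_0_iff2)

lemma Dpoly_nonzero:
  assumes "0 < n"
  shows "Dpoly n c \<noteq> 0"
proof
  assume "Dpoly n c = 0"
  then have "crit_line_prod n 0 = crit_line_prod n 1"
    using Dpoly_critical_line_root_iff[of n c] by simp
  then show False
    using crit_line_prod_strict_mono[OF assms, of 0 1] by simp
qed

lemma Dpoly_reflect: "Dpoly n c \<circ>\<^sub>p [:of_real (2 * real n - 1), -1:] = Dpoly n c"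
proof -
  have "poly (Dpoly n c \<circ>\<^sub>p [:of_real (2 * real n - 1), -1:]) z = poly (Dpoly n c) z" for z
  proof -
    have "(of_real (2 * real n - 1) - z - of_real (real n - 1/2))^2 = (z - of_real (real n - 1/2))^2"
      by (simp add: power2_eq_square algebra_simps)
    then show ?thesis
      by (simp only: poly_pcompose poly_Dpoly) simp
  qed
  then show ?thesis
    by (simp add: poly_eq_poly_eq_iff[symmetric] fun_eq_iff)
qed

lemma Dpoly_critical_line_root_simple:
  assumes "0 < n" "t \<noteq> 0" and root: "poly (Dpoly n c) (Complex (real n - 1/2) t) = 0"
  shows "order (Complex (real n - 1/2) t) (Dpoly n c) = 1"
proof -
  define m :: complex where "m = of_real (real n - 1/2)"
  define z where "z = Complex (real n - 1/2) t"
  define f where "f k u = (u - m)^2 - of_real (real n - 1/2 - real k)^2" for k u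
  have f_z: "f k z = - of_real (t^2 + (real n - 1/2 - real k)^2)" for k
    by (simp add: f_def m_def z_def complex_eq_iff power2_eq_square)
  have f_z_nonzero: "f k z \<noteq> 0" for k
    unfolding f_z neg_equal_0_iff_equal of_real_eq_0_iff
    using \<open>t \<noteq> 0\<close> by (simp add: add_nonneg_eq_0_iff)
  have "((\<lambda>u. (\<Prod>k<n. f k u) + (-1)^n * of_real c) has_field_derivative
      (\<Prod>k<n. f k z) * (\<Sum>k<n. 2 * (z - m) / f k z)) (at z)"
    using f_z_nonzero
    by (auto intro!: derivative_eq_intros has_field_derivative_prod' simp: f_def)
  moreover have "poly (Dpoly n c) = (\<lambda>u. (\<Prod>k<n. f k u) + (-1)^n * of_real c)"
    by (simp add: fun_eq_iff poly_Dpoly f_def m_def)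
  ultimately have pderiv_z: "poly (pderiv (Dpoly n c)) z = (\<Prod>k<n. f k z) * (\<Sum>k<n. 2 * (z - m) / f k z)"
    by (metis DERIV_unique poly_DERIV)
  define S where "S = (\<Sum>k<n. 1 / (t^2 + (real n - 1/2 - real k)^2))"
  have "z - m = \<i> * of_real t"
    by (simp add: z_def m_def complex_eq_iff)
  then have "(\<Sum>k<n. 2 * (z - m) / f k z) = (\<Sum>k<n. - 2 * \<i> * of_real (t / (t^2 + (real n - 1/2 - real k)^2)))"
    by (intro sum.cong refl) (simp only: f_z divide_minus_right of_real_divide, simp)
  also have "\<dots> = - 2 * \<i> * of_real (t * S)"
    by (simp add: S_def sum_distrib_left flip: sum_distrib_left[of "- 2 * \<i>"])
  finally have sum_eq: "(\<Sum>k<n. 2 * (z - m) / f k z) = - 2 * \<i> * of_real (t * S)" .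
  have "0 < S"
    unfolding S_def using \<open>0 < n\<close> \<open>t \<noteq> 0\<close> by (intro sum_pos) (auto intro: add_pos_nonneg)
  then have "poly (pderiv (Dpoly n c)) z \<noteq> 0"
    unfolding pderiv_z sum_eq mult_eq_0_iff of_real_eq_0_iff prod_zero_iff[OF finite_lessThan]
    using f_z_nonzero \<open>t \<noteq> 0\<close> by simp
  then show ?thesis
    using order_pderiv[OF Dpoly_nonzero[OF \<open>0 < n\<close>] root] order_root
    unfolding z_def by (metis One_nat_def)
qed

lemma abs_le_of_square_diff_le:
  fixes x y :: real
  assumes "0 \<le> N" "\<bar>x\<bar> \<le> M" "y^2 - x^2 \<le> N * \<bar>x * y\<bar>"
  shows "\<bar>y\<bar> \<le> (N + 1) * M"
proof (rule ccontr)
  assume "\<not> ?thesis"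
  then have y: "N * M + M < \<bar>y\<bar>"
    by (simp add: algebra_simps)
  have "0 \<le> M" "0 \<le> N * M"
    using assms(1,2) by simp_all
  then have "\<bar>x\<bar> * \<bar>x\<bar> \<le> M * \<bar>y\<bar>"
    using assms(2) y by (intro mult_mono) auto
  moreover have "N * \<bar>x * y\<bar> \<le> N * M * \<bar>y\<bar>"
    using assms(1,2) by (simp add: abs_mult mult.assoc mult_left_mono mult_right_mono)
  moreover have "(N * M + M) * \<bar>y\<bar> < \<bar>y\<bar> * \<bar>y\<bar>"
    using y \<open>0 \<le> M\<close> \<open>0 \<le> N * M\<close> by (intro mult_strict_right_mono) auto
  ultimately show False
    using assms(3) by (simp add: algebra_simps power2_eq_square)
qed

lemma Dpoly_root_near_critical_line:
  assumes "0 < n" "0 < M" and c: "(((2 * real n + 2) * M)^2 + (real n - 1/2)^2)^n < \<bar>c\<bar>"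
    and root: "poly (Dpoly n c) z = 0" and near: "\<bar>Re z - (real n - 1/2)\<bar> \<le> M"
  shows "c < 0 \<and> Re z = real n - 1/2"
proof -
  define m where "m = real n - 1/2"
  define w where "w = z - of_real m"
  define P where "P = (\<Prod>k<n. w^2 - of_real (m - real k)^2)"
  have P: "P = - ((-1)^n * of_real c)"
    using root by (simp add: poly_Dpoly P_def w_def m_def add_eq_0_iff2)
  have Re_w: "\<bar>Re w\<bar> \<le> M"
    using near by (simp add: w_def m_def)
  have steep: "2 * real n * \<bar>Re w * Im w\<bar> < (Im w)^2 - (Re w)^2"
  proof (rule ccontr)
    assume "\<not> ?thesis"
    then have "\<bar>Im w\<bar> \<le> (2 * real n + 1) * M"
      using abs_le_of_square_diff_le[OF _ Re_w, of "2 * real n" "Im w"] by simp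
    then have "norm w \<le> (2 * real n + 2) * M"
      using Re_w cmod_le[of w] by (simp add: algebra_simps)
    then have "norm P \<le> (((2 * real n + 2) * M)^2 + m^2)^n"
      unfolding P_def using \<open>0 < M\<close> \<open>0 < n\<close>
      by (intro order_trans[OF norm_prod_square_minus_le[of n _ m]] power_mono add_mono)
         (auto simp: m_def)
    then show False
      using c by (simp add: P norm_mult norm_power m_def)
  qed
  have "P \<in> \<real>"
    by (simp add: P)
  then have "Re w = 0 \<and> 0 < (-1)^n * Re P"
    using prod_square_minus_Reals_steep[of n w "\<lambda>k. m - real k"] \<open>0 < n\<close> steep
    by (simp add: P_def)
  moreover have "(-1)^n * Re P = - c"
    by (cases "even n") (simp_all add: P)
  ultimately show ?thesis
    by (simp add: w_def m_def)
qed

lemma Dpoly_roots_near_critical_line: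
  assumes "0 < n" "0 < M"
  shows "\<forall>\<^sub>F c in at_infinity. \<forall>z. poly (Dpoly n c) z = 0 \<longrightarrow> \<bar>Re z - (real n - 1/2)\<bar> \<le> M
           \<longrightarrow> c < 0 \<and> Re z = real n - 1/2"
  unfolding eventually_at_infinity
  by (intro exI[of _ "(((2 * real n + 2) * M)^2 + (real n - 1/2)^2)^n + 1"] allI impI
      Dpoly_root_near_critical_line[OF assms]) auto

lemma Dpoly_roots_leave_strip_at_top:
  assumes "0 < n"
  shows "\<forall>\<^sub>F c in at_top. \<forall>z. poly (Dpoly n c) z = 0 \<longrightarrow> M < \<bar>Re z - (real n - 1/2)\<bar>"
proof -
  have "\<forall>\<^sub>F c in at_top. (\<forall>z. poly (Dpoly n c) z = 0 \<longrightarrow> \<bar>Re z - (real n - 1/2)\<bar> \<le> max 1 M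
      \<longrightarrow> c < 0 \<and> Re z = real n - 1/2) \<and> 0 < c"
    using filter_leD[OF at_top_le_at_infinity Dpoly_roots_near_critical_line[OF assms, of "max 1 M"]]
    by (intro eventually_conj) auto
  then show ?thesis
    by (rule eventually_mono) (force simp: not_less)
qed

lemma Dpoly_roots_in_strip_on_critical_line_at_bot:
  assumes "0 < n"
  shows "\<forall>\<^sub>F c in at_bot. \<forall>z. poly (Dpoly n c) z = 0 \<longrightarrow> \<bar>Re z - (real n - 1/2)\<bar> \<le> M
           \<longrightarrow> Re z = real n - 1/2"
proof -
  have "0 < max 1 M"
    by simp
  from filter_leD[OF at_bot_le_at_infinity Dpoly_roots_near_critical_line[OF assms this]]
  show ?thesis
    by (rule eventually_mono) (meson max.coboundedI2 order.trans)
qed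

section \<open>Labellings of the roots ordered by real part\<close>

lemma filterlim_at_bot_mono:
  fixes f g :: "'a \<Rightarrow> real"
  assumes "filterlim f at_bot F" and "\<forall>\<^sub>F x in F. g x \<le> f x"
  shows "filterlim g at_bot F"
  using assms by (simp add: filterlim_uminus_at_bot filterlim_at_top_mono)

lemma filterlim_const_minus_at_top:
  fixes f :: "'a \<Rightarrow> real"
  assumes "filterlim f at_bot F"
  shows "filterlim (\<lambda>x. a - f x) at_top F"
  using filterlim_tendsto_add_at_top[OF tendsto_const assms[unfolded filterlim_uminus_at_bot]]
  by simp

locale Dpoly_root_labelling =
  fixes n :: nat and \<alpha> :: "nat \<Rightarrow> real \<Rightarrow> complex"
  assumes n_pos: "0 < n"
    and roots: "\<And>c. image_mset (\<lambda>j. \<alpha> j c) (mset_set {1..2*n}) = proots (Dpoly n c)"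
    and ord: "\<And>c j. 1 \<le> j \<Longrightarrow> j < 2*n \<Longrightarrow> Re (\<alpha> j c) \<le> Re (\<alpha> (Suc j) c)"
begin

lemma Re_mono:
  assumes "1 \<le> i" "i \<le> j" "j \<le> 2*n"
  shows "Re (\<alpha> i c) \<le> Re (\<alpha> j c)"
  using assms(2,3)
proof (induction j rule: dec_induct)
  case (step j)
  then show ?case
    using ord[of j c] assms(1) by simp
qed simp

lemma root_label:
  assumes "j \<in> {1..2*n}"
  shows "poly (Dpoly n c) (\<alpha> j c) = 0"
proof -
  have "\<alpha> j c \<in># proots (Dpoly n c)"
    unfolding roots[symmetric] using assms by simp
  then show ?thesis
    using Dpoly_nonzero[OF n_pos] by simp
qed

lemma label_root:
  assumes "poly (Dpoly n c) z = 0"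
  obtains j where "j \<in> {1..2*n}" "\<alpha> j c = z"
proof -
  have "z \<in># proots (Dpoly n c)"
    using assms Dpoly_nonzero[OF n_pos] by simp
  then show ?thesis
    using that unfolding roots[symmetric] by auto
qed

lemma labels_distinct_at_simple_root:
  assumes "i \<in> {1..2*n}" "j \<in> {1..2*n}" "i \<noteq> j" "order (\<alpha> i c) (Dpoly n c) = 1"
  shows "\<alpha> i c \<noteq> \<alpha> j c"
proof
  assume eq: "\<alpha> i c = \<alpha> j c"
  have "mset_set {1..2*n} = add_mset i (add_mset j (mset_set ({1..2*n} - {i} - {j})))"
    using assms(1-3) by (simp add: mset_set.remove[symmetric])
  then have "2 \<le> count (image_mset (\<lambda>j. \<alpha> j c) (mset_set {1..2*n})) (\<alpha> i c)"
    using eq by simp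
  then show False
    using assms(4) Dpoly_nonzero[OF n_pos] unfolding roots by simp
qed

lemma Re_reflect:
  assumes "j \<in> {1..2*n}"
  shows "Re (\<alpha> j c) = (2 * real n - 1) - Re (\<alpha> (2*n + 1 - j) c)"
proof -
  define xs where "xs = map (\<lambda>j. Re (\<alpha> j c)) [1..<2*n + 1]"
  have xs_nth: "xs ! i = Re (\<alpha> (Suc i) c)" if "i < 2*n" for i
    using that by (simp add: xs_def nth_map_upt del: upt_Suc)
  have "sorted xs"
    by (auto simp: sorted_iff_nth_mono xs_def nth_map_upt intro!: Re_mono simp del: upt_Suc)
  have mset_xs: "mset xs = image_mset Re (proots (Dpoly n c))"
    by (simp add: xs_def mset_map mset_upt roots[symmetric] multiset.map_comp o_def
        atLeastLessThanSuc_atLeastAtMost del: upt_Suc)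
  have "mset (map (\<lambda>x. (2 * real n - 1) - x) xs)
      = image_mset (\<lambda>z. Re (of_real (2 * real n - 1) - z)) (proots (Dpoly n c))"
    by (simp add: mset_map mset_xs multiset.map_comp o_def)
  also have "\<dots> = image_mset Re (image_mset (\<lambda>z. of_real (2 * real n - 1) - z) (proots (Dpoly n c)))"
    by (simp add: multiset.map_comp o_def)
  also have "\<dots> = mset xs"
    by (simp only: proots_reflect[OF Dpoly_reflect] mset_xs)
  finally have invariant: "mset (map (\<lambda>x. (2 * real n - 1) - x) xs) = mset xs" .
  obtain i where i: "j = Suc i" "i < 2*n"
    using assms by (cases j) auto
  then have "xs ! i + xs ! (2*n - 1 - i) = 2 * real n - 1"
    using sorted_reflection_invariant_nth[OF \<open>sorted xs\<close> invariant, of i] by (simp add: xs_def)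
  moreover have "Suc (2*n - 1 - i) = 2*n + 1 - j"
    using i by simp
  ultimately show ?thesis
    using i by (simp add: xs_nth)
qed

lemma Re_middle_le: "Re (\<alpha> n c) \<le> real n - 1/2"
  using Re_reflect[of n c] Re_mono[of n "n + 1" c] n_pos by simp

lemma Re_middle_at_top: "filterlim (\<lambda>c. Re (\<alpha> n c)) at_bot at_top"
  unfolding filterlim_at_bot
proof
  fix Z :: real
  show "\<forall>\<^sub>F c in at_top. Re (\<alpha> n c) \<le> Z"
    using Dpoly_roots_leave_strip_at_top[OF n_pos, of "real n - 1/2 - Z"]
  proof (rule eventually_mono)
    fix c :: real
    assume "\<forall>z. poly (Dpoly n c) z = 0 \<longrightarrow> real n - 1/2 - Z < \<bar>Re z - (real n - 1/2)\<bar>"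
    then show "Re (\<alpha> n c) \<le> Z"
      using root_label[of n c] n_pos Re_middle_le[of c] by force
  qed
qed

lemma Re_middle_at_bot:
  "\<forall>\<^sub>F c in at_bot. Re (\<alpha> n c) = real n - 1/2 \<and> Re (\<alpha> (n + 1) c) = real n - 1/2"
  using Dpoly_roots_in_strip_on_critical_line_at_bot[OF n_pos, of 1]
    eventually_le_at_bot[of "- crit_line_prod n 0"]
proof (rule eventually_elim2)
  fix c :: real
  assume near: "\<forall>z. poly (Dpoly n c) z = 0 \<longrightarrow> \<bar>Re z - (real n - 1/2)\<bar> \<le> 1
      \<longrightarrow> Re z = real n - 1/2" and "c \<le> - crit_line_prod n 0"
  obtain t where "crit_line_prod n t = - c"
    using crit_line_prod_surj[OF n_pos, of "- c"] \<open>c \<le> - crit_line_prod n 0\<close> by auto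
  then obtain j where j: "j \<in> {1..2*n}" "\<alpha> j c = Complex (real n - 1/2) t"
    using label_root Dpoly_critical_line_root_iff by metis
  have "Re (\<alpha> n c) = real n - 1/2"
  proof (rule ccontr)
    assume "Re (\<alpha> n c) \<noteq> real n - 1/2"
    then have "Re (\<alpha> n c) < real n - 1/2 - 1"
      using near root_label[of n c] n_pos Re_middle_le[of c] by force
    moreover have "Re (\<alpha> (n + 1) c) = 2 * real n - 1 - Re (\<alpha> n c)"
      using Re_reflect[of n c] n_pos by simp
    ultimately show False
      using j Re_mono[of j n c] Re_mono[of "n + 1" j c] by (cases "j \<le> n") auto
  qed
  then show "Re (\<alpha> n c) = real n - 1/2 \<and> Re (\<alpha> (n + 1) c) = real n - 1/2"
    using Re_reflect[of n c] n_pos by simp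
qed

lemma critical_line_at_most_two_labels:
  assumes "c < - crit_line_prod n 0" and "1 \<le> i" "i < j" "j < k" "k \<le> 2*n"
    and "Re (\<alpha> i c) = real n - 1/2" "Re (\<alpha> j c) = real n - 1/2" "Re (\<alpha> k c) = real n - 1/2"
  shows False
proof -
  have on_line: "crit_line_prod n (Im (\<alpha> l c)) = - c \<and> Im (\<alpha> l c) \<noteq> 0 \<and> order (\<alpha> l c) (Dpoly n c) = 1"
    if "l \<in> {1..2*n}" "Re (\<alpha> l c) = real n - 1/2" for l
  proof -
    have l: "\<alpha> l c = Complex (real n - 1/2) (Im (\<alpha> l c))"
      using that(2) by (simp add: complex_eq_iff)
    then have root: "poly (Dpoly n c) (Complex (real n - 1/2) (Im (\<alpha> l c))) = 0"
      using root_label[OF that(1)] by simp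
    then have "crit_line_prod n (Im (\<alpha> l c)) = - c"
      by (simp add: Dpoly_critical_line_root_iff)
    moreover have "Im (\<alpha> l c) \<noteq> 0"
      using calculation assms(1) by auto
    ultimately show ?thesis
      using Dpoly_critical_line_root_simple[OF n_pos _ root] l by simp
  qed
  have ijk: "i \<in> {1..2*n}" "j \<in> {1..2*n}" "k \<in> {1..2*n}"
    using assms(2-5) by auto
  have "Im (\<alpha> i c) \<noteq> Im (\<alpha> j c)" "Im (\<alpha> i c) \<noteq> Im (\<alpha> k c)" "Im (\<alpha> j c) \<noteq> Im (\<alpha> k c)"
    using labels_distinct_at_simple_root[of i j c] labels_distinct_at_simple_root[of i k c]
      labels_distinct_at_simple_root[of j k c] on_line ijk assms(3,4,6-8)
    by (auto simp: complex_eq_iff)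
  moreover have "(Im (\<alpha> i c))^2 = (Im (\<alpha> j c))^2" "(Im (\<alpha> i c))^2 = (Im (\<alpha> k c))^2"
    using on_line ijk assms(6-8) crit_line_prod_eq_iff[OF n_pos] by metis+
  ultimately show False
    by (auto simp: power2_eq_iff)
qed

lemma Re_below_middle_at_bot:
  assumes "1 < n"
  shows "filterlim (\<lambda>c. Re (\<alpha> (n - 1) c)) at_bot at_bot"
  unfolding filterlim_at_bot
proof
  fix Z :: real
  have "\<forall>\<^sub>F c in at_bot. (\<forall>z. poly (Dpoly n c) z = 0 \<longrightarrow> \<bar>Re z - (real n - 1/2)\<bar> \<le> real n - 1/2 - Z
      \<longrightarrow> Re z = real n - 1/2) \<and>
      (Re (\<alpha> n c) = real n - 1/2 \<and> Re (\<alpha> (n + 1) c) = real n - 1/2) \<and> c < - crit_line_prod n 0"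
    by (intro eventually_conj Dpoly_roots_in_strip_on_critical_line_at_bot[OF n_pos] Re_middle_at_bot)
      simp
  then show "\<forall>\<^sub>F c in at_bot. Re (\<alpha> (n - 1) c) \<le> Z"
  proof (rule eventually_mono, elim conjE)
    fix c :: real
    assume near: "\<forall>z. poly (Dpoly n c) z = 0 \<longrightarrow> \<bar>Re z - (real n - 1/2)\<bar> \<le> real n - 1/2 - Z
        \<longrightarrow> Re z = real n - 1/2"
      and middle: "Re (\<alpha> n c) = real n - 1/2" "Re (\<alpha> (n + 1) c) = real n - 1/2"
      and "c < - crit_line_prod n 0"
    show "Re (\<alpha> (n - 1) c) \<le> Z"
    proof (rule ccontr)
      assume "\<not> Re (\<alpha> (n - 1) c) \<le> Z"
      moreover have "Re (\<alpha> (n - 1) c) \<le> Re (\<alpha> n c)"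
        using assms by (intro Re_mono) auto
      ultimately have "Re (\<alpha> (n - 1) c) = real n - 1/2"
        using near root_label[of "n - 1" c] assms middle by force
      moreover have "1 \<le> n - 1"
        using assms by simp
      ultimately show False
        using critical_line_at_most_two_labels[of c "n - 1" n "n + 1"] \<open>c < - crit_line_prod n 0\<close>
          assms middle by simp
    qed
  qed
qed

lemma Re_label_lower_at_top:
  assumes "j \<in> {1..n}"
  shows "filterlim (\<lambda>c. Re (\<alpha> j c)) at_bot at_top"
  using assms by (intro filterlim_at_bot_mono[OF Re_middle_at_top] always_eventually allI Re_mono) auto

lemma Re_label_upper_at_top:
  assumes "j \<in> {n+1..2*n}"
  shows "filterlim (\<lambda>c. Re (\<alpha> j c)) at_top at_top"
proof -
  have "filterlim (\<lambda>c. Re (\<alpha> (2*n + 1 - j) c)) at_bot at_top"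
    using assms by (intro Re_label_lower_at_top) auto
  then show ?thesis
    using assms by (subst Re_reflect) (auto intro: filterlim_const_minus_at_top)
qed

lemma Re_label_lower_at_bot:
  assumes "j \<in> {1..n-1}"
  shows "filterlim (\<lambda>c. Re (\<alpha> j c)) at_bot at_bot"
  using assms
  by (intro filterlim_at_bot_mono[OF Re_below_middle_at_bot] always_eventually allI Re_mono) auto

lemma Re_label_middle_at_bot:
  assumes "j \<in> {n..n+1}"
  shows "((\<lambda>c. Re (\<alpha> j c)) \<longlongrightarrow> real n - 1/2) at_bot"
proof (rule tendsto_eventually)
  have "j = n \<or> j = n + 1"
    using assms by auto
  then show "\<forall>\<^sub>F c in at_bot. Re (\<alpha> j c) = real n - 1/2"
    using Re_middle_at_bot by (elim disjE) (auto elim: eventually_mono)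
qed

lemma Re_label_upper_at_bot:
  assumes "j \<in> {n+2..2*n}"
  shows "filterlim (\<lambda>c. Re (\<alpha> j c)) at_top at_bot"
proof -
  have "filterlim (\<lambda>c. Re (\<alpha> (2*n + 1 - j) c)) at_bot at_bot"
    using assms by (intro Re_label_lower_at_bot) auto
  then show ?thesis
    using assms by (subst Re_reflect) (auto intro: filterlim_const_minus_at_top)
qed

end

theorem lemma4p4:
  fixes n :: nat and \<alpha> :: "nat \<Rightarrow> real \<Rightarrow> complex"
  assumes roots: "\<And>c. image_mset (\<lambda>j. \<alpha> j c) (mset_set {1..2*n}) = proots (Dpoly n c)"
    and cont: "\<And>j. j \<in> {1..2*n} \<Longrightarrow> continuous_on UNIV (\<alpha> j)"
    and ord: "\<And>c j. 1 \<le> j \<Longrightarrow> j < 2*n \<Longrightarrow> Re (\<alpha> j c) \<le> Re (\<alpha> (Suc j) c)"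
  shows "(\<forall>j\<in>{1..n}. filterlim (\<lambda>c. Re (\<alpha> j c)) at_bot at_top) \<and>
      (\<forall>j\<in>{n+1..2*n}. filterlim (\<lambda>c. Re (\<alpha> j c)) at_top at_top) \<and>
      (\<forall>j\<in>{1..n-1}. filterlim (\<lambda>c. Re (\<alpha> j c)) at_bot at_bot) \<and>
      (\<forall>j\<in>{n..n+1}. 1 \<le> j \<and> j \<le> 2*n \<longrightarrow> ((\<lambda>c. Re (\<alpha> j c)) \<longlongrightarrow> real n - 1/2) at_bot) \<and>
      (\<forall>j\<in>{n+2..2*n}. filterlim (\<lambda>c. Re (\<alpha> j c)) at_top at_bot)"
proof (cases "n = 0")
  case False
  then interpret Dpoly_root_labelling n \<alpha>
    using roots ord by unfold_locales auto
  show ?thesis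
    using Re_label_lower_at_top Re_label_upper_at_top Re_label_lower_at_bot
      Re_label_middle_at_bot Re_label_upper_at_bot by blast
qed simp

end
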